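(* For every positive integer $t$, $$ma_t(t)=\frac12+\frac{\lfloor (t-1)/2\rfloor}{2t}.$$
   Context: A voter matrix with $t$ topics is a matrix $V\in\{Y,N\}^{n\times t}$ for some positive integer $n$ (rows are voters), subject to the standing assumption that in every column the number of entries $Y$ is at least the number of entries $N$. $\mathcal{V}_t$ is the set of all voter matrices with $t$ topics and any number of voters. A proposal is a vector $p\in\{Y,N\}^t$. A voter $v$ supports $p$ if the Hamming distance between $v$ and $p$ is at most $t/2$; $p$ is supported by $V$ if at least $n/2$ rows of $V$ support $p$. $md_V$ is the maximum number of entries $Y$ of a proposal supported by $V$. $m_V$ denotes the fraction of entries $Y$ among all $nt$ entries of $V$ (the average majority). For an integer $w$ with $\lceil (t+1)/2\rceil\le w\le t$, $ma_t(w)$ is the supremum of $m_V$ over all $V\in\mathcal{V}_t$ with $md_V<w$, with the convention that $ma_t(w)=\frac12$ if no such $V$ exists. *)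

theory Defs
  imports Complex_Main
begin

text \<open>A voter matrix with t topics and n voters is represented by a pair (n, V) where
  V :: nat \<Rightarrow> nat \<Rightarrow> bool, V i j = True meaning entry Y in row i (voter), column j (topic);
  only i < n and j < t are relevant. A proposal is p :: nat \<Rightarrow> bool (only j < t relevant).\<close>

definition voter_matrix :: "nat \<Rightarrow> nat \<Rightarrow> (nat \<Rightarrow> nat \<Rightarrow> bool) \<Rightarrow> bool" where
  "voter_matrix t n V \<longleftrightarrow> n > 0 \<and>
     (\<forall>j<t. card {i. i < n \<and> \<not> V i j} \<le> card {i. i < n \<and> V i j})"

definition hamming :: "nat \<Rightarrow> (nat \<Rightarrow> bool) \<Rightarrow> (nat \<Rightarrow> bool) \<Rightarrow> nat" where
  "hamming t v p = card {j. j < t \<and> v j \<noteq> p j}"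

definition voter_supports :: "nat \<Rightarrow> (nat \<Rightarrow> bool) \<Rightarrow> (nat \<Rightarrow> bool) \<Rightarrow> bool" where
  "voter_supports t v p \<longleftrightarrow> real (hamming t v p) \<le> real t / 2"

definition supported :: "nat \<Rightarrow> nat \<Rightarrow> (nat \<Rightarrow> nat \<Rightarrow> bool) \<Rightarrow> (nat \<Rightarrow> bool) \<Rightarrow> bool" where
  "supported t n V p \<longleftrightarrow> real (card {i. i < n \<and> voter_supports t (V i) p}) \<ge> real n / 2"

definition numY :: "nat \<Rightarrow> (nat \<Rightarrow> bool) \<Rightarrow> nat" where
  "numY t p = card {j. j < t \<and> p j}"

definition md :: "nat \<Rightarrow> nat \<Rightarrow> (nat \<Rightarrow> nat \<Rightarrow> bool) \<Rightarrow> nat" where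
  "md t n V = Max {numY t p | p. supported t n V p}"

definition avg_majority :: "nat \<Rightarrow> nat \<Rightarrow> (nat \<Rightarrow> nat \<Rightarrow> bool) \<Rightarrow> real" where
  "avg_majority t n V = real (card {(i, j). i < n \<and> j < t \<and> V i j}) / (real n * real t)"

definition ma :: "nat \<Rightarrow> nat \<Rightarrow> real" where
  "ma t w = (if \<exists>n V. voter_matrix t n V \<and> md t n V < w
             then Sup {avg_majority t n V | n V. voter_matrix t n V \<and> md t n V < w}
             else 1 / 2)"

end

theory Submission
  imports Defs
begin

text \<open>If \<open>md_V < t\<close>, the all-Y proposal is not supported, so more than half of the voters
  reject it, and a voter rejecting it has at least \<open>h = t div 2 + 1\<close> entries N. Hence
  \<open>m_V < 1 - h/(2t)\<close>, which is the claimed value. For \<open>t \<le> 2\<close> this bound is \<open>1/2\<close>, while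
  every column has at least \<open>n/2\<close> entries Y, so \<open>m_V \<ge> 1/2\<close>: no voter matrix qualifies
  and \<open>ma_t(t) = 1/2\<close> by convention. For \<open>t \<ge> 3\<close> the bound is approached by
  \<open>n = 2tq - 1\<close> voters: \<open>tq\<close> voters whose entries N are the cyclic shifts of a block of
  \<open>h\<close> consecutive topics, and \<open>tq - 1\<close> voters saying Y throughout. Every column then has
  \<open>qh \<le> n/2\<close> entries N, the all-N proposal has \<open>tq\<close> supporters, the all-Y proposal only
  \<open>tq - 1\<close>, and \<open>m_V = 1 - h/(2t - 1/q)\<close> tends to \<open>1 - h/(2t)\<close> as \<open>q \<rightarrow> \<infinity>\<close>.\<close>

lemma inj_on_add_mod_lessThan: "inj_on (\<lambda>x. (x + c) mod t) {..<t::nat}"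
proof (rule inj_onI)
  fix x y assume "x \<in> {..<t}" "y \<in> {..<t}" "(x + c) mod t = (y + c) mod t"
  then obtain q1 q2 where "x + c + t * q1 = y + c + t * q2"
    by (auto simp: nat_mod_eq_iff)
  then have "(x + t * q1) mod t = (y + t * q2) mod t" by simp
  with \<open>x \<in> {..<t}\<close> \<open>y \<in> {..<t}\<close> show "x = y" by simp
qed

lemma card_add_mod_less:
  fixes t c h :: nat
  assumes "h \<le> t"
  shows "card {x. x < t \<and> (x + c) mod t < h} = h"
proof -
  let ?f = "\<lambda>x. (x + c) mod t"
  have "?f ` {..<t} = {..<t}"
    by (rule endo_inj_surj[OF _ _ inj_on_add_mod_lessThan]) auto
  have image: "?f ` {x. x < t \<and> ?f x < h} = {..<h}"
  proof
    show "{..<h} \<subseteq> ?f ` {x. x < t \<and> ?f x < h}"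
    proof
      fix y assume "y \<in> {..<h}"
      with assms have "y \<in> ?f ` {..<t}"
        using \<open>?f ` {..<t} = {..<t}\<close> by simp
      then obtain x where "x < t" "y = ?f x" by auto
      with \<open>y \<in> {..<h}\<close> show "y \<in> ?f ` {x. x < t \<and> ?f x < h}" by auto
    qed
  qed auto
  have "inj_on ?f {x. x < t \<and> ?f x < h}"
    by (rule inj_on_subset[OF inj_on_add_mod_lessThan]) auto
  then have "card (?f ` {x. x < t \<and> ?f x < h}) = card {x. x < t \<and> ?f x < h}"
    by (rule card_image)
  with image show ?thesis by simp
qed

lemma card_mod_periodic:
  fixes t q :: nat
  shows "card {i. i < t * q \<and> P (i mod t)} = q * card {i. i < t \<and> P i}"
proof -
  have "a * t + b < t * q" if "a < q" "b < t" for a b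
  proof -
    have "a * t + b < Suc a * t" using that(2) by simp
    also have "\<dots> \<le> q * t" using that(1) by (intro mult_le_mono1) simp
    finally show ?thesis by (simp add: mult.commute)
  qed
  moreover have "i mod t < t" if "i < t * q" for i
    using that by (cases "t = 0") auto
  ultimately have bij: "bij_betw (\<lambda>(a, b). a * t + b) ({..<q} \<times> {i. i < t \<and> P i})
      {i. i < t * q \<and> P (i mod t)}"
    by (intro bij_betw_byWitness[where f' = "\<lambda>i. (i div t, i mod t)"])
      (auto simp: less_mult_imp_div_less mult.commute)
  show ?thesis
    using bij_betw_same_card[OF bij] by (simp add: card_cartesian_product)
qed

lemma card_Collect_less_add_not:
  "card {j. j < t \<and> P j} + card {j. j < t \<and> \<not> P j} = (t::nat)"
proof -
  have "card ({j. j < t \<and> P j} \<union> {j. j < t \<and> \<not> P j})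
      = card {j. j < t \<and> P j} + card {j. j < t \<and> \<not> P j}"
    by (rule card_Un_disjoint) auto
  moreover have "{j. j < t \<and> P j} \<union> {j. j < t \<and> \<not> P j} = {..<t}" by auto
  ultimately show ?thesis by simp
qed

lemma card_entries_by_rows:
  fixes n t :: nat
  shows "card {(i, j). i < n \<and> j < t \<and> V i j} = (\<Sum>i<n. card {j. j < t \<and> V i j})"
proof -
  have "{(i, j). i < n \<and> j < t \<and> V i j} = Sigma {..<n} (\<lambda>i. {j. j < t \<and> V i j})"
    by auto
  also have "card \<dots> = (\<Sum>i<n. card {j. j < t \<and> V i j})"
    by (rule card_SigmaI) auto
  finally show ?thesis .
qed

lemma card_entries_by_columns:
  fixes n t :: nat
  shows "card {(i, j). i < n \<and> j < t \<and> V i j} = (\<Sum>j<t. card {i. i < n \<and> V i j})"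
proof -
  have "{(i, j). i < n \<and> j < t \<and> V i j} = prod.swap ` Sigma {..<t} (\<lambda>j. {i. i < n \<and> V i j})"
    by auto
  also have "card \<dots> = card (Sigma {..<t} (\<lambda>j. {i. i < n \<and> V i j}))"
    by (rule card_image) simp
  also have "\<dots> = (\<Sum>j<t. card {i. i < n \<and> V i j})"
    by (rule card_SigmaI) auto
  finally show ?thesis .
qed

lemma cSup_eq_tendsto:
  fixes f :: "nat \<Rightarrow> 'a::{conditionally_complete_linorder, linorder_topology}"
  assumes "\<And>x. x \<in> S \<Longrightarrow> x \<le> L" and "eventually (\<lambda>k. f k \<in> S) sequentially"
    and "f \<longlonglongrightarrow> L"
  shows "Sup S = L"
proof (rule cSup_eq_non_empty)
  show "S \<noteq> {}"
    using assms(2) by (auto simp: eventually_sequentially)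
  show "x \<le> L" if "x \<in> S" for x
    using assms(1) that .
  fix y assume "\<And>x. x \<in> S \<Longrightarrow> x \<le> y"
  then have "eventually (\<lambda>k. f k \<le> y) sequentially"
    using assms(2) by (auto elim: eventually_mono)
  then show "L \<le> y"
    using tendsto_upperbound[OF assms(3)] by simp
qed

lemma voter_supports_all_yes_iff:
  "voter_supports t v (\<lambda>_. True) \<longleftrightarrow> 2 * card {j. j < t \<and> \<not> v j} \<le> t"
  unfolding voter_supports_def hamming_def by simp linarith

lemma voter_supports_all_no_iff:
  "voter_supports t v (\<lambda>_. False) \<longleftrightarrow> 2 * card {j. j < t \<and> v j} \<le> t"
  unfolding voter_supports_def hamming_def by simp linarith

lemma numY_le: "numY t p \<le> t"
  unfolding numY_def by (metis card_Collect_less_add_not le_add1)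

lemma numY_eq_iff: "numY t p = t \<longleftrightarrow> (\<forall>j<t. p j)"
proof -
  have "numY t p = t \<longleftrightarrow> card {j. j < t \<and> \<not> p j} = 0"
    using card_Collect_less_add_not[of t p] unfolding numY_def by linarith
  then show ?thesis by simp
qed

lemma supported_cong:
  assumes "\<forall>j<t. p j = p' j"
  shows "supported t n V p = supported t n V p'"
proof -
  have "hamming t v p = hamming t v p'" for v
    unfolding hamming_def using assms by metis
  then show ?thesis unfolding supported_def voter_supports_def by simp
qed

lemma finite_numY_supported: "finite {numY t p | p. supported t n V p}"
proof (rule finite_subset)
  show "{numY t p | p. supported t n V p} \<subseteq> {..t}"
    using numY_le by blast
qed simp

lemma numY_le_md:
  assumes "supported t n V p"
  shows "numY t p \<le> md t n V"
  unfolding md_def using assms by (intro Max_ge finite_numY_supported) blast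

lemma md_less_if_all_yes_unsupported:
  assumes "supported t n V p" and "\<not> supported t n V (\<lambda>_. True)"
  shows "md t n V < t"
proof -
  have "md t n V \<in> {numY t p | p. supported t n V p}"
    unfolding md_def using assms(1) by (intro Max_in finite_numY_supported) blast
  then obtain p' where p': "supported t n V p'" "md t n V = numY t p'"
    by blast
  have "numY t p' \<noteq> t"
    using p'(1) assms(2) supported_cong[of t p' "\<lambda>_. True"] by (auto simp: numY_eq_iff)
  then show ?thesis using p'(2) numY_le[of t p'] by simp
qed

lemma all_yes_unsupported_if_md_less:
  assumes "md t n V < t"
  shows "\<not> supported t n V (\<lambda>_. True)"
  using numY_le_md[of t n V "\<lambda>_. True"] assms by (auto simp: numY_def)

lemma avg_majority_ge_half:
  assumes "voter_matrix t n V" and "t > 0"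
  shows "1 / 2 \<le> avg_majority t n V"
proof -
  have "n > 0" using assms(1) unfolding voter_matrix_def by simp
  have "n \<le> 2 * card {i. i < n \<and> V i j}" if "j < t" for j
    using assms(1) that card_Collect_less_add_not[of n "\<lambda>i. V i j"]
    unfolding voter_matrix_def by auto
  then have "(\<Sum>j<t. n) \<le> (\<Sum>j<t. 2 * card {i. i < n \<and> V i j})"
    by (intro sum_mono) simp
  then have "n * t \<le> 2 * card {(i, j). i < n \<and> j < t \<and> V i j}"
    by (simp add: card_entries_by_columns sum_distrib_left mult.commute)
  then have "real (n * t) \<le> real (2 * card {(i, j). i < n \<and> j < t \<and> V i j})"
    by (simp only: of_nat_le_iff)
  then show ?thesis
    unfolding avg_majority_def using \<open>n > 0\<close> assms(2) by (simp add: field_simps)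
qed

lemma avg_majority_less_if_all_yes_unsupported:
  assumes "n > 0" and "t > 0" and "\<not> supported t n V (\<lambda>_. True)"
  shows "avg_majority t n V < 1 - real (t div 2 + 1) / (2 * real t)"
proof -
  define h where "h = t div 2 + 1"
  define B where "B = {i \<in> {..<n}. \<not> voter_supports t (V i) (\<lambda>_. True)}"
  have "2 * (n - card B) < n"
    using assms(3) card_Collect_less_add_not[of n "\<lambda>i. voter_supports t (V i) (\<lambda>_. True)"]
    unfolding supported_def B_def by simp
  have row: "card {j. j < t \<and> V i j} + (if i \<in> B then h else 0) \<le> t" if "i < n" for i
    using card_Collect_less_add_not[of t "V i"] that
    unfolding B_def h_def voter_supports_all_yes_iff by auto
  have "(\<Sum>i<n. card {j. j < t \<and> V i j}) + card B * h \<le> n * t"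
  proof -
    have "(\<Sum>i<n. if i \<in> B then h else 0) = card B * h"
      unfolding B_def by (simp add: sum.inter_filter[symmetric])
    moreover have "(\<Sum>i<n. card {j. j < t \<and> V i j} + (if i \<in> B then h else 0)) \<le> (\<Sum>i<n. t)"
      using row by (intro sum_mono) simp
    ultimately show ?thesis by (simp add: sum.distrib)
  qed
  moreover have "n * h < 2 * card B * h"
    using \<open>2 * (n - card B) < n\<close> by (intro mult_less_mono1) (auto simp: h_def)
  ultimately have "2 * card {(i, j). i < n \<and> j < t \<and> V i j} + n * h < 2 * n * t"
    unfolding card_entries_by_rows by linarith
  then have "real (2 * card {(i, j). i < n \<and> j < t \<and> V i j} + n * h) < real (2 * n * t)"
    by (simp only: of_nat_less_iff)
  then show ?thesis
    unfolding avg_majority_def h_def[symmetric] using assms(1,2) by (simp add: field_simps)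
qed

lemma avg_majority_less_if_md_less:
  assumes "voter_matrix t n V" and "md t n V < t" and "0 < t"
  shows "avg_majority t n V < 1 - real (t div 2 + 1) / (2 * real t)"
proof (rule avg_majority_less_if_all_yes_unsupported)
  show "0 < n" using assms(1) unfolding voter_matrix_def by simp
qed (use assms all_yes_unsupported_if_md_less in auto)

lemma no_voter_matrix_md_less_if_le_2:
  assumes "0 < t" and "t \<le> 2"
  shows "\<not> (voter_matrix t n V \<and> md t n V < t)"
proof
  assume V: "voter_matrix t n V \<and> md t n V < t"
  have "t div 2 + 1 = t" using assms by presburger
  then have "avg_majority t n V < 1 / 2"
    using avg_majority_less_if_md_less[of t n V] V assms(1) by simp
  then show False
    using avg_majority_ge_half[of t n V] V assms(1) by simp
qed

definition rotation_matrix :: "nat \<Rightarrow> nat \<Rightarrow> nat \<Rightarrow> nat \<Rightarrow> nat \<Rightarrow> bool" where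
  "rotation_matrix t h q i j \<longleftrightarrow> \<not> (i < t * q \<and> (i + j) mod t < h)"

lemma rotation_matrix_row_no_count:
  assumes "h \<le> t" and "i < t * q"
  shows "card {j. j < t \<and> \<not> rotation_matrix t h q i j} = h"
proof -
  have "{j. j < t \<and> \<not> rotation_matrix t h q i j} = {j. j < t \<and> (j + i) mod t < h}"
    using assms(2) by (auto simp: rotation_matrix_def add.commute)
  then show ?thesis using card_add_mod_less[OF assms(1)] by simp
qed

lemma rotation_matrix_column_no_count:
  assumes "h \<le> t" and "t * q \<le> n"
  shows "card {i. i < n \<and> \<not> rotation_matrix t h q i j} = q * h"
proof -
  have "{i. i < n \<and> \<not> rotation_matrix t h q i j} = {i. i < t * q \<and> (i mod t + j) mod t < h}"
    using assms(2) by (auto simp: rotation_matrix_def mod_add_left_eq)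
  then show ?thesis
    using card_mod_periodic[of t q "\<lambda>x. (x + j) mod t < h"] card_add_mod_less[OF assms(1)]
    by simp
qed

lemma rotation_matrix_column_yes_count:
  assumes "h \<le> t" and "t * q \<le> n"
  shows "card {i. i < n \<and> rotation_matrix t h q i j} = n - q * h"
  using card_Collect_less_add_not[of n "\<lambda>i. rotation_matrix t h q i j"]
    rotation_matrix_column_no_count[OF assms] by simp

lemma rotation_matrix_voter_matrix:
  assumes "h < t" and "0 < q"
  shows "voter_matrix t (2 * t * q - 1) (rotation_matrix t h q)"
proof -
  have "q * h < t * q"
    using assms by (simp add: mult.commute[of t q])
  then have "0 < 2 * t * q - 1" and "t * q \<le> 2 * t * q - 1" and "q * h \<le> (2 * t * q - 1) - q * h"
    by linarith+
  then show ?thesis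
    using rotation_matrix_column_no_count[of h t q] rotation_matrix_column_yes_count[of h t q] assms(1)
    unfolding voter_matrix_def by simp
qed

lemma md_rotation_matrix_less:
  assumes "t < 2 * h" and "h \<le> t" and "0 < q"
  shows "md t (2 * t * q - 1) (rotation_matrix t h q) < t"
proof (rule md_less_if_all_yes_unsupported)
  let ?n = "2 * t * q - 1" and ?R = "rotation_matrix t h q"
  have "0 < t * q" using assms by simp
  then have "t * q \<le> ?n" by linarith
  show "supported t ?n ?R (\<lambda>_. False)"
  proof -
    have sub: "{..<t * q} \<subseteq> {i. i < ?n \<and> voter_supports t (?R i) (\<lambda>_. False)}"
    proof
      fix i assume "i \<in> {..<t * q}"
      then have "card {j. j < t \<and> ?R i j} = t - h"
        using card_Collect_less_add_not[of t "?R i"] rotation_matrix_row_no_count[OF assms(2), of i q]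
        by simp
      then show "i \<in> {i. i < ?n \<and> voter_supports t (?R i) (\<lambda>_. False)}"
        using assms(1) \<open>t * q \<le> ?n\<close> \<open>i \<in> {..<t * q}\<close> by (simp add: voter_supports_all_no_iff)
    qed
    have "t * q \<le> card {i. i < ?n \<and> voter_supports t (?R i) (\<lambda>_. False)}"
      using card_mono[OF _ sub] by simp
    then show ?thesis
      unfolding supported_def using \<open>0 < t * q\<close> by linarith
  qed
  show "\<not> supported t ?n ?R (\<lambda>_. True)"
  proof -
    have sub: "{i. i < ?n \<and> voter_supports t (?R i) (\<lambda>_. True)} \<subseteq> {t * q..<?n}"
    proof
      fix i assume "i \<in> {i. i < ?n \<and> voter_supports t (?R i) (\<lambda>_. True)}"
      then have "i < ?n" and "2 * card {j. j < t \<and> \<not> ?R i j} \<le> t"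
        by (simp_all add: voter_supports_all_yes_iff)
      moreover have "\<not> i < t * q"
      proof
        assume "i < t * q"
        then have "card {j. j < t \<and> \<not> ?R i j} = h"
          by (rule rotation_matrix_row_no_count[OF assms(2)])
        with \<open>2 * card {j. j < t \<and> \<not> ?R i j} \<le> t\<close> assms(1) show False by simp
      qed
      ultimately show "i \<in> {t * q..<?n}" by simp
    qed
    have "card {i. i < ?n \<and> voter_supports t (?R i) (\<lambda>_. True)} \<le> ?n - t * q"
      using card_mono[OF finite_atLeastLessThan sub] by (simp only: card_atLeastLessThan)
    then have "real (2 * card {i. i < ?n \<and> voter_supports t (?R i) (\<lambda>_. True)}) < real ?n"
      unfolding of_nat_less_iff using \<open>0 < t * q\<close> by linarith
    then show ?thesis
      unfolding supported_def by simp
  qed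
qed

lemma avg_majority_rotation_matrix:
  assumes "h \<le> t" and "0 < t" and "0 < q"
  shows "avg_majority t (2 * t * q - 1) (rotation_matrix t h q) = 1 - real h / (2 * real t - 1 / real q)"
proof -
  let ?n = "2 * t * q - 1"
  have "0 < t * q" using assms by simp
  moreover have "q * h \<le> t * q" using assms(1) by (simp add: mult.commute[of t q])
  ultimately have "t * q \<le> ?n" and "q * h \<le> ?n" by linarith+
  have n: "real ?n = 2 * real t * real q - 1"
    using \<open>0 < t * q\<close> by simp
  have "card {(i, j). i < ?n \<and> j < t \<and> rotation_matrix t h q i j} = t * (?n - q * h)"
    using rotation_matrix_column_yes_count[OF assms(1) \<open>t * q \<le> ?n\<close>]
    by (simp add: card_entries_by_columns)
  then have "avg_majority t ?n (rotation_matrix t h q) = real (?n - q * h) / real ?n"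
    unfolding avg_majority_def using assms(2) by simp
  also have "\<dots> = (real ?n - real q * real h) / real ?n"
    by (simp only: of_nat_diff[OF \<open>q * h \<le> ?n\<close>] of_nat_mult)
  also have "\<dots> = 1 - real h / (2 * real t - 1 / real q)"
  proof -
    have "1 \<le> real t * real q" using \<open>0 < t * q\<close>
      by (metis of_nat_1 of_nat_le_iff of_nat_mult Suc_leI One_nat_def)
    then show ?thesis unfolding n using assms(3) by (simp add: field_simps)
  qed
  finally show ?thesis .
qed

lemma rotation_matrix_attains:
  assumes "3 \<le> t" and "0 < q"
  shows "\<exists>n V. voter_matrix t n V \<and> md t n V < t \<and>
    avg_majority t n V = 1 - real (t div 2 + 1) / (2 * real t - 1 / real q)"
proof (intro exI conjI)
  have "t div 2 + 1 < t" and "t < 2 * (t div 2 + 1)" using assms(1) by presburger+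
  then show "voter_matrix t (2 * t * q - 1) (rotation_matrix t (t div 2 + 1) q)"
    and "md t (2 * t * q - 1) (rotation_matrix t (t div 2 + 1) q) < t"
    and "avg_majority t (2 * t * q - 1) (rotation_matrix t (t div 2 + 1) q)
      = 1 - real (t div 2 + 1) / (2 * real t - 1 / real q)"
    using rotation_matrix_voter_matrix md_rotation_matrix_less avg_majority_rotation_matrix assms
    by simp_all
qed

lemma Sup_avg_majority_md_less:
  assumes "3 \<le> t"
  shows "Sup {avg_majority t n V | n V. voter_matrix t n V \<and> md t n V < t}
    = 1 - real (t div 2 + 1) / (2 * real t)"
    (is "Sup ?S = ?L")
proof (rule cSup_eq_tendsto)
  let ?f = "\<lambda>q. 1 - real (t div 2 + 1) / (2 * real t - 1 / real q)"
  show "x \<le> ?L" if "x \<in> ?S" for x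
    using that avg_majority_less_if_md_less[of t] assms by fastforce
  have "?f q \<in> ?S" if q: "0 < q" for q
  proof -
    obtain n V where "voter_matrix t n V" "md t n V < t" "?f q = avg_majority t n V"
      using rotation_matrix_attains[OF assms q] by fastforce
    then show ?thesis by blast
  qed
  then show "eventually (\<lambda>q. ?f q \<in> ?S) sequentially"
    unfolding eventually_sequentially by (intro exI[of _ 1]) simp
  have "(\<lambda>q. 2 * real t - 1 / real q) \<longlonglongrightarrow> 2 * real t - 0"
    by (intro tendsto_intros)
  then show "?f \<longlonglongrightarrow> ?L"
    using assms by (intro tendsto_intros) auto
qed

theorem lemma5p8:
  fixes t :: nat
  assumes "t > 0"
  shows "ma t t = 1 / 2 + real ((t - 1) div 2) / (2 * real t)"
proof (cases "t \<le> 2")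
  case True
  then have "\<not> (\<exists>n V. voter_matrix t n V \<and> md t n V < t)"
    using no_voter_matrix_md_less_if_le_2[OF assms] by blast
  then have "ma t t = 1 / 2" unfolding ma_def by (rule if_not_P)
  moreover have "(t - 1) div 2 = 0" using True by auto
  ultimately show ?thesis by simp
next
  case False
  then have "3 \<le> t" by simp
  then have "\<exists>n V. voter_matrix t n V \<and> md t n V < t"
    using rotation_matrix_attains[of t 1] by auto
  then have "ma t t = 1 - real (t div 2 + 1) / (2 * real t)"
    unfolding ma_def using Sup_avg_majority_md_less[OF \<open>3 \<le> t\<close>] by simp
  moreover have "(t - 1) div 2 + (t div 2 + 1) = t"
    using assms by presburger
  ultimately show ?thesis
    using assms by (simp add: field_simps flip: of_nat_add)
qed

end
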